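(* Let $n\ge 2$ and let $(\epsilon_k)_{k\ge1}$ be a sequence in $(0,1)$ strictly decreasing to $0$. For $\vec a = (a_1,\dots,a_n)\in\ell^\infty_n$ and $1\le r\le n$ put $\varphi^r_k(\vec a) = a_r(1-\epsilon_k) + \frac{\epsilon_k}{n-1}\sum_{j\ne r}a_j$, and $\psi_k(\vec a) = (\varphi^1_k(\vec a),\dots,\varphi^n_k(\vec a))\in\ell^\infty_n$. Let $H = \bigoplus_{k=1}^\infty H_k$ with each $H_k = \mathbb{C}^n$, and define $\Psi : \ell^\infty_n\to B(H)$ by letting $\Psi(\vec a)$ be the diagonal operator acting on $H_k$ as the diagonal matrix with diagonal $\psi_k(\vec a)$. Then $\Psi$ is a unital complete isometry, and if $p,q\in B(H)$ are projections such that $(1-q)\Psi(\vec a) = \Psi(\vec a)(1-p)$ for all $\vec a$ and $\vec a\mapsto (1-q)\Psi(\vec a)$ is a triple morphism, then $p = q = 1$ (so this triple morphism is the zero map). In particular, there is no projection $p\in B(H)$ other than $1$ for which $(1-p)\Psi(\cdot) = \Psi(\cdot)(1-p)$ is a *-homomorphism.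
   Context: $\ell^\infty_n$ is $\mathbb{C}^n$ with the sup norm, a commutative $C^*$-algebra. A triple morphism is a linear map $T$ with $T(xy^*z) = T(x)T(y)^*T(z)$. *)

theory Defs
  imports Complex_Main "HOL-Library.Cardinality"
begin

text \<open>The Hilbert space H = direct sum over k of C^n, with n = CARD('n).
  Vectors of H are modelled as square-summable functions  nat => 'n => complex
  (block index k, coordinate r).  Bounded operators on H are modelled as
  functions on such vectors; they are only ever compared on the carrier L2.\<close>

type_synonym 'n hvec = "nat \<Rightarrow> 'n \<Rightarrow> complex"
type_synonym 'n hop = "'n hvec \<Rightarrow> 'n hvec"

definition L2 :: "'n::finite hvec set" where
  "L2 = {f. summable (\<lambda>k. \<Sum>r\<in>UNIV. (cmod (f k r))\<^sup>2)}"

definition l2sq :: "'n::finite hvec \<Rightarrow> real" where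
  "l2sq f = (\<Sum>k. \<Sum>r\<in>UNIV. (cmod (f k r))\<^sup>2)"

definition l2norm :: "'n::finite hvec \<Rightarrow> real" where
  "l2norm f = sqrt (l2sq f)"

definition l2inner :: "'n::finite hvec \<Rightarrow> 'n hvec \<Rightarrow> complex" where
  "l2inner f g = (\<Sum>k. \<Sum>r\<in>UNIV. f k r * cnj (g k r))"

definition hadd :: "'n hvec \<Rightarrow> 'n hvec \<Rightarrow> 'n hvec" where
  "hadd f g = (\<lambda>k r. f k r + g k r)"

definition hsub :: "'n hvec \<Rightarrow> 'n hvec \<Rightarrow> 'n hvec" where
  "hsub f g = (\<lambda>k r. f k r - g k r)"

definition hsmul :: "complex \<Rightarrow> 'n hvec \<Rightarrow> 'n hvec" where
  "hsmul c f = (\<lambda>k r. c * f k r)"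

definition bounded_op :: "'n::finite hop \<Rightarrow> bool" where
  "bounded_op T \<longleftrightarrow>
     (\<forall>f\<in>L2. T f \<in> L2) \<and>
     (\<forall>f\<in>L2. \<forall>g\<in>L2. T (hadd f g) = hadd (T f) (T g)) \<and>
     (\<forall>c. \<forall>f\<in>L2. T (hsmul c f) = hsmul c (T f)) \<and>
     (\<exists>C. \<forall>f\<in>L2. l2norm (T f) \<le> C * l2norm f)"

definition l2_adjoint :: "'n::finite hop \<Rightarrow> 'n hop" where
  "l2_adjoint S g = (THE h. h \<in> L2 \<and> (\<forall>f\<in>L2. l2inner (S f) g = l2inner f h))"

definition projection :: "'n::finite hop \<Rightarrow> bool" where
  "projection p \<longleftrightarrow> bounded_op p \<and> (\<forall>f\<in>L2. p (p f) = p f) \<and>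
     (\<forall>f\<in>L2. \<forall>g\<in>L2. l2inner (p f) g = l2inner f (p g))"

definition linear_map :: "(('n::finite \<Rightarrow> complex) \<Rightarrow> 'n hop) \<Rightarrow> bool" where
  "linear_map T \<longleftrightarrow>
     (\<forall>a b. \<forall>f\<in>L2. T (\<lambda>r. a r + b r) f = hadd (T a f) (T b f)) \<and>
     (\<forall>c a. \<forall>f\<in>L2. T (\<lambda>r. c * a r) f = hsmul c (T a f))"

definition triple_morphism :: "(('n::finite \<Rightarrow> complex) \<Rightarrow> 'n hop) \<Rightarrow> bool" where
  "triple_morphism T \<longleftrightarrow> linear_map T \<and>
     (\<forall>x y z. \<forall>f\<in>L2. T (\<lambda>r. x r * cnj (y r) * z r) f = T x (l2_adjoint (T y) (T z f)))"

definition star_hom :: "(('n::finite \<Rightarrow> complex) \<Rightarrow> 'n hop) \<Rightarrow> bool" where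
  "star_hom T \<longleftrightarrow> linear_map T \<and>
     (\<forall>a b. \<forall>f\<in>L2. T (\<lambda>r. a r * b r) f = T a (T b f)) \<and>
     (\<forall>a. \<forall>f\<in>L2. T (\<lambda>r. cnj (a r)) f = l2_adjoint (T a) f)"

definition cmat_norm :: "nat \<Rightarrow> (nat \<Rightarrow> nat \<Rightarrow> complex) \<Rightarrow> real" where
  "cmat_norm m M = Sup {sqrt (\<Sum>i<m. (cmod (\<Sum>j<m. M i j * v j))\<^sup>2) | v.
       (\<Sum>j<m. (cmod (v j))\<^sup>2) \<le> 1}"

text \<open>Norm in M_m(l^infty_n) = l^infty_n(M_m) (canonical C*-algebra structure).\<close>
definition linf_mat_norm :: "nat \<Rightarrow> (nat \<Rightarrow> nat \<Rightarrow> ('n::finite \<Rightarrow> complex)) \<Rightarrow> real" where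
  "linf_mat_norm m A = Max (range (\<lambda>r. cmat_norm m (\<lambda>i j. A i j r)))"

text \<open>Norm in M_m(B(H)) = B(H^m).\<close>
definition bh_mat_norm :: "nat \<Rightarrow> (nat \<Rightarrow> nat \<Rightarrow> 'n::finite hop) \<Rightarrow> real" where
  "bh_mat_norm m X = Sup {sqrt (\<Sum>i<m. l2sq (\<lambda>k r. \<Sum>j<m. X i j (F j) k r)) | F.
       (\<forall>j<m. F j \<in> L2) \<and> (\<Sum>j<m. l2sq (F j)) \<le> 1}"

definition complete_isometry :: "(('n::finite \<Rightarrow> complex) \<Rightarrow> 'n hop) \<Rightarrow> bool" where
  "complete_isometry T \<longleftrightarrow> linear_map T \<and> (\<forall>a. bounded_op (T a)) \<and>
     (\<forall>m\<ge>1. \<forall>A. bh_mat_norm m (\<lambda>i j. T (A i j)) = linf_mat_norm m A)"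

definition unital_map :: "(('n::finite \<Rightarrow> complex) \<Rightarrow> 'n hop) \<Rightarrow> bool" where
  "unital_map T \<longleftrightarrow> (\<forall>f\<in>L2. T (\<lambda>r. 1) f = f)"

text \<open>phi^r_k and Psi (blocks indexed from k = 0, i.e. eps 0 is the paper's epsilon_1).\<close>
definition phi :: "(nat \<Rightarrow> real) \<Rightarrow> nat \<Rightarrow> ('n::finite \<Rightarrow> complex) \<Rightarrow> 'n \<Rightarrow> complex" where
  "phi eps k a r = a r * complex_of_real (1 - eps k)
      + complex_of_real (eps k / (real CARD('n) - 1)) * (\<Sum>j\<in>UNIV - {r}. a j)"

definition Psi :: "(nat \<Rightarrow> real) \<Rightarrow> ('n::finite \<Rightarrow> complex) \<Rightarrow> 'n hop" where
  "Psi eps a = (\<lambda>f k r. phi eps k a r * f k r)"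

end

(*
  Each block of Psi is a convex combination a |-> sum_s c(k,r,s) a_s of the coordinates, with all
  weights c(k,r,s) = psi_coeff eps k r s in (0,1) and c(k,r,r) -> 1 as k -> infinity. Convexity
  bounds every matrix amplification of Psi by the norm of M_m(l^infty_n), and letting k -> infinity
  recovers that norm, so Psi is a unital complete isometry.

  For the rigidity statement, a = 1 in the intertwining relation gives q = p on H. For a minimal
  projection e of l^infty_n the identity e = e 1^* e (resp. e = e e) turns the triple (resp. *-)
  morphism T = (1 - q) Psi into T(e) = Psi(e) (1 - p) T(e). Since T(e) = (1 - p) Psi(e) already
  takes values in the range of 1 - p, with g = (1 - p) f this reads Psi(e) g = Psi(e) (Psi(e) g).
  As every diagonal entry of Psi(e) lies strictly between 0 and 1, g = 0, that is p = q = 1.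
*)

theory Submission
  imports Defs "HOL-Analysis.Analysis"
begin

section \<open>Matrix norms on \<open>\<complex>\<^sup>m\<close>\<close>

definition cvec_norm :: "nat \<Rightarrow> (nat \<Rightarrow> complex) \<Rightarrow> real" where
  "cvec_norm m v = sqrt (\<Sum>j<m. (cmod (v j))\<^sup>2)"

definition cmat_apply :: "nat \<Rightarrow> (nat \<Rightarrow> nat \<Rightarrow> complex) \<Rightarrow> (nat \<Rightarrow> complex) \<Rightarrow> nat \<Rightarrow> complex" where
  "cmat_apply m M v = (\<lambda>i. \<Sum>j<m. M i j * v j)"

lemma cvec_norm_eq_L2_set: "cvec_norm m v = L2_set (\<lambda>j. cmod (v j)) {..<m}"
  by (simp add: cvec_norm_def L2_set_def)

lemma cvec_norm_nonneg: "0 \<le> cvec_norm m v"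
  by (simp add: cvec_norm_eq_L2_set)

lemma power2_cvec_norm: "(cvec_norm m v)\<^sup>2 = (\<Sum>j<m. (cmod (v j))\<^sup>2)"
  unfolding cvec_norm_def by (simp add: sum_nonneg)

lemma cvec_norm_triangle: "cvec_norm m (\<lambda>i. x i + y i) \<le> cvec_norm m x + cvec_norm m y"
proof -
  have "cvec_norm m (\<lambda>i. x i + y i) \<le> L2_set (\<lambda>i. cmod (x i) + cmod (y i)) {..<m}"
    unfolding cvec_norm_eq_L2_set by (rule L2_set_mono) (auto simp: norm_triangle_ineq)
  also have "\<dots> \<le> cvec_norm m x + cvec_norm m y"
    unfolding cvec_norm_eq_L2_set by (rule L2_set_triangle_ineq)
  finally show ?thesis .
qed

lemma cvec_norm_scale: "cvec_norm m (\<lambda>i. c * v i) = cmod c * cvec_norm m v"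
  unfolding cvec_norm_eq_L2_set by (simp add: L2_set_right_distrib norm_mult)

lemma cvec_norm_sum_le:
  "finite S \<Longrightarrow> cvec_norm m (\<lambda>i. \<Sum>s\<in>S. x s i) \<le> (\<Sum>s\<in>S. cvec_norm m (x s))"
proof (induction S rule: finite_induct)
  case empty
  then show ?case by (simp add: cvec_norm_def)
next
  case (insert a S)
  then have "cvec_norm m (\<lambda>i. \<Sum>s\<in>insert a S. x s i)
      = cvec_norm m (\<lambda>i. x a i + (\<Sum>s\<in>S. x s i))" by simp
  also have "\<dots> \<le> cvec_norm m (x a) + cvec_norm m (\<lambda>i. \<Sum>s\<in>S. x s i)"
    by (rule cvec_norm_triangle)
  finally show ?case using insert by simp
qed

lemma norm_le_cvec_norm: "j < m \<Longrightarrow> cmod (v j) \<le> cvec_norm m v"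
  unfolding cvec_norm_eq_L2_set by (rule member_le_L2_set) auto

lemma cmat_apply_scale: "cmat_apply m M (\<lambda>j. c * v j) = (\<lambda>i. c * cmat_apply m M v i)"
  unfolding cmat_apply_def by (auto simp: sum_distrib_left ac_simps)

lemma cmat_norm_eq_Sup: "cmat_norm m M = Sup {cvec_norm m (cmat_apply m M v) | v. cvec_norm m v \<le> 1}"
  unfolding cmat_norm_def cvec_norm_def cmat_apply_def by simp

lemma bdd_above_cmat_values: "bdd_above {cvec_norm m (cmat_apply m M v) | v. cvec_norm m v \<le> 1}"
proof -
  have "cvec_norm m (cmat_apply m M v) \<le> (\<Sum>i<m. \<Sum>j<m. cmod (M i j))" if v: "cvec_norm m v \<le> 1" for v
  proof -
    have "cmod (cmat_apply m M v i) \<le> (\<Sum>j<m. cmod (M i j))" for i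
    proof -
      have "cmod (cmat_apply m M v i) \<le> (\<Sum>j<m. cmod (M i j * v j))"
        unfolding cmat_apply_def by (rule norm_sum)
      also have "\<dots> \<le> (\<Sum>j<m. cmod (M i j))"
      proof (rule sum_mono)
        fix j assume "j \<in> {..<m}"
        then have "cmod (v j) \<le> 1" using norm_le_cvec_norm[of j m v] v by simp
        then show "cmod (M i j * v j) \<le> cmod (M i j)" by (simp add: norm_mult mult_left_le)
      qed
      finally show ?thesis .
    qed
    then have "cvec_norm m (cmat_apply m M v) \<le> L2_set (\<lambda>i. \<Sum>j<m. cmod (M i j)) {..<m}"
      unfolding cvec_norm_eq_L2_set by (intro L2_set_mono) auto
    also have "\<dots> \<le> (\<Sum>i<m. \<Sum>j<m. cmod (M i j))"
      by (rule L2_set_le_sum) (simp add: sum_nonneg)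
    finally show ?thesis .
  qed
  then show ?thesis unfolding bdd_above_def by blast
qed

lemma cmat_norm_upper: "cvec_norm m v \<le> 1 \<Longrightarrow> cvec_norm m (cmat_apply m M v) \<le> cmat_norm m M"
  unfolding cmat_norm_eq_Sup by (rule cSup_upper) (use bdd_above_cmat_values in auto)

lemma cmat_norm_least:
  "(\<And>v. cvec_norm m v \<le> 1 \<Longrightarrow> cvec_norm m (cmat_apply m M v) \<le> L) \<Longrightarrow> cmat_norm m M \<le> L"
  unfolding cmat_norm_eq_Sup
  by (rule cSup_least) (auto intro!: exI[of _ "\<lambda>_. 0"] simp: cvec_norm_def)

lemma cmat_norm_nonneg: "0 \<le> cmat_norm m M"
  using cmat_norm_upper[of m "\<lambda>_. 0" M] cvec_norm_nonneg[of m "cmat_apply m M (\<lambda>_. 0)"]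
  by (simp add: cvec_norm_def cmat_apply_def)

lemma cmat_norm_bound: "cvec_norm m (cmat_apply m M v) \<le> cmat_norm m M * cvec_norm m v"
proof (cases "cvec_norm m v = 0")
  case True
  then have "\<forall>j<m. v j = 0"
    using norm_le_cvec_norm[of _ m v] by (metis norm_le_zero_iff)
  then have "cmat_apply m M v = (\<lambda>_. 0)" unfolding cmat_apply_def by auto
  then show ?thesis using True by (simp add: cvec_norm_def)
next
  case False
  then have pos: "cvec_norm m v > 0" using cvec_norm_nonneg[of m v] by linarith
  define c where "c = complex_of_real (1 / cvec_norm m v)"
  have c: "cmod c = 1 / cvec_norm m v" unfolding c_def using pos by (simp add: norm_divide)
  have "cvec_norm m (\<lambda>j. c * v j) = 1" using pos by (simp add: cvec_norm_scale c)
  then have "cvec_norm m (cmat_apply m M (\<lambda>j. c * v j)) \<le> cmat_norm m M"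
    by (intro cmat_norm_upper) simp
  then have "cvec_norm m (cmat_apply m M v) / cvec_norm m v \<le> cmat_norm m M"
    by (simp add: cmat_apply_scale cvec_norm_scale c)
  then show ?thesis using pos by (simp add: divide_le_eq)
qed

lemma cmat_norm_convex_le:
  assumes "finite S" and "\<And>s. s \<in> S \<Longrightarrow> 0 \<le> c s"
  shows "cmat_norm m (\<lambda>i j. \<Sum>s\<in>S. of_real (c s) * M s i j)
    \<le> (\<Sum>s\<in>S. c s * cmat_norm m (M s))"
proof (rule cmat_norm_least)
  fix v assume v: "cvec_norm m v \<le> 1"
  have "cmat_apply m (\<lambda>i j. \<Sum>s\<in>S. of_real (c s) * M s i j) v
      = (\<lambda>i. \<Sum>s\<in>S. of_real (c s) * cmat_apply m (M s) v i)"
    unfolding cmat_apply_def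
    by (auto simp: sum_distrib_left sum_distrib_right ac_simps intro: sum.swap)
  then have "cvec_norm m (cmat_apply m (\<lambda>i j. \<Sum>s\<in>S. of_real (c s) * M s i j) v)
      \<le> (\<Sum>s\<in>S. cvec_norm m (\<lambda>i. of_real (c s) * cmat_apply m (M s) v i))"
    using cvec_norm_sum_le[OF assms(1)] by simp
  also have "\<dots> = (\<Sum>s\<in>S. c s * cvec_norm m (cmat_apply m (M s) v))"
    using assms(2) by (intro sum.cong) (simp_all add: cvec_norm_scale)
  also have "\<dots> \<le> (\<Sum>s\<in>S. c s * cmat_norm m (M s))"
    using assms(2) cmat_norm_upper[OF v] by (intro sum_mono mult_left_mono) auto
  finally show "cvec_norm m (cmat_apply m (\<lambda>i j. \<Sum>s\<in>S. of_real (c s) * M s i j) v)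
      \<le> (\<Sum>s\<in>S. c s * cmat_norm m (M s))" .
qed

lemma cmat_norm_le_of_tendsto:
  assumes "\<And>k. cmat_norm m (M k) \<le> L" and "\<And>i j. (\<lambda>k. M k i j) \<longlonglongrightarrow> N i j"
  shows "cmat_norm m N \<le> L"
proof (rule cmat_norm_least)
  fix v assume v: "cvec_norm m v \<le> 1"
  have "(\<lambda>k. cvec_norm m (cmat_apply m (M k) v)) \<longlonglongrightarrow> cvec_norm m (cmat_apply m N v)"
    unfolding cvec_norm_def cmat_apply_def by (intro tendsto_intros assms(2))
  moreover have "cvec_norm m (cmat_apply m (M k) v) \<le> L" for k
    using cmat_norm_upper[OF v] assms(1) by (rule order_trans)
  ultimately show "cvec_norm m (cmat_apply m N v) \<le> L"
    by (intro LIMSEQ_le_const2) auto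
qed

section \<open>The Hilbert space \<open>H\<close>\<close>

definition hdelta :: "nat \<Rightarrow> 'n \<Rightarrow> complex \<Rightarrow> 'n hvec" where
  "hdelta k0 r0 c = (\<lambda>k r. if k = k0 \<and> r = r0 then c else 0)"

lemma hdelta_sums: "(\<lambda>k. \<Sum>r\<in>UNIV. (cmod (hdelta k0 (r0::'n::finite) c k r))\<^sup>2) sums (cmod c)\<^sup>2"
proof -
  have "(\<lambda>k. \<Sum>r\<in>UNIV. (cmod (hdelta k0 r0 c k r))\<^sup>2)
      = (\<lambda>k. if k = k0 then (cmod c)\<^sup>2 else 0)"
    by (rule ext) (simp add: hdelta_def if_distrib[of cmod] if_distrib[of power2] sum.delta cong: if_cong)
  then show ?thesis using sums_single[of k0 "\<lambda>_. (cmod c)\<^sup>2"] by simp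
qed

lemma hdelta_L2: "hdelta k0 r0 c \<in> L2"
  and l2sq_hdelta: "l2sq (hdelta k0 r0 c) = (cmod c)\<^sup>2"
  using hdelta_sums[of k0 r0 c] unfolding L2_def l2sq_def by (auto simp: sums_iff)

lemma l2inner_hdelta: "l2inner (hdelta k0 (r0::'n::finite) 1) x = cnj (x k0 r0)"
proof -
  have "(\<lambda>k. \<Sum>r\<in>UNIV. hdelta k0 r0 1 k r * cnj (x k r))
      = (\<lambda>k. \<Sum>r\<in>UNIV. if k = k0 \<and> r = r0 then cnj (x k0 r0) else 0)"
    by (intro ext sum.cong) (auto simp: hdelta_def)
  also have "\<dots> = (\<lambda>k. if k = k0 then cnj (x k0 r0) else 0)"
    by (rule ext) (simp add: sum.delta cong: if_cong)
  finally have "(\<lambda>k. \<Sum>r\<in>UNIV. hdelta k0 r0 1 k r * cnj (x k r))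
      = (\<lambda>k. if k = k0 then cnj (x k0 r0) else 0)" .
  then show ?thesis
    using sums_single[of k0 "\<lambda>_. cnj (x k0 r0)"] unfolding l2inner_def by (simp add: sums_iff)
qed

lemma L2_dominated:
  assumes f: "f \<in> L2" and le: "\<And>k r. cmod (g k r) \<le> B * cmod (f k r)"
  shows "g \<in> L2" and "l2sq g \<le> B\<^sup>2 * l2sq f"
proof -
  have le2: "(\<Sum>r\<in>UNIV. (cmod (g k r))\<^sup>2) \<le> B\<^sup>2 * (\<Sum>r\<in>UNIV. (cmod (f k r))\<^sup>2)" for k
    unfolding sum_distrib_left
    by (rule sum_mono) (metis le norm_ge_zero power_mono power_mult_distrib)
  have fs: "summable (\<lambda>k. B\<^sup>2 * (\<Sum>r\<in>UNIV. (cmod (f k r))\<^sup>2))"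
    using f by (intro summable_mult) (simp add: L2_def)
  have gs: "summable (\<lambda>k. \<Sum>r\<in>UNIV. (cmod (g k r))\<^sup>2)"
    by (rule summable_comparison_test'[OF fs]) (use le2 in \<open>auto simp: sum_nonneg\<close>)
  then show "g \<in> L2" by (simp add: L2_def)
  have "l2sq g \<le> (\<Sum>k. B\<^sup>2 * (\<Sum>r\<in>UNIV. (cmod (f k r))\<^sup>2))"
    unfolding l2sq_def by (rule suminf_le[OF le2 gs fs])
  also have "\<dots> = B\<^sup>2 * l2sq f"
    unfolding l2sq_def using f by (intro suminf_mult) (simp add: L2_def)
  finally show "l2sq g \<le> B\<^sup>2 * l2sq f" .
qed

lemma L2_hsub:
  assumes f: "f \<in> L2" and g: "g \<in> L2"
  shows "hsub f g \<in> L2"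
proof -
  have s: "summable (\<lambda>k. 2 * (\<Sum>r\<in>UNIV. (cmod (f k r))\<^sup>2) + 2 * (\<Sum>r\<in>UNIV. (cmod (g k r))\<^sup>2))"
    using f g unfolding L2_def by (intro summable_add summable_mult) auto
  have "(cmod (f k r - g k r))\<^sup>2 \<le> 2 * (cmod (f k r))\<^sup>2 + 2 * (cmod (g k r))\<^sup>2" for k r
  proof -
    have "(cmod (f k r - g k r))\<^sup>2 \<le> (cmod (f k r) + cmod (g k r))\<^sup>2"
      by (simp add: power_mono norm_triangle_ineq4)
    then show ?thesis using sum_squares_bound[of "cmod (f k r)" "cmod (g k r)"]
      by (simp add: power2_sum)
  qed
  then have "(\<Sum>r\<in>UNIV. (cmod (f k r - g k r))\<^sup>2)
      \<le> (\<Sum>r\<in>UNIV. 2 * (cmod (f k r))\<^sup>2 + 2 * (cmod (g k r))\<^sup>2)" for k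
    by (rule sum_mono)
  then have "(\<Sum>r\<in>UNIV. (cmod (f k r - g k r))\<^sup>2)
      \<le> 2 * (\<Sum>r\<in>UNIV. (cmod (f k r))\<^sup>2) + 2 * (\<Sum>r\<in>UNIV. (cmod (g k r))\<^sup>2)" for k
    by (simp add: sum.distrib sum_distrib_left)
  then show ?thesis
    unfolding L2_def hsub_def mem_Collect_eq
    by (intro summable_comparison_test'[OF s]) (simp add: sum_nonneg)
qed

lemma L2_hsmul: "f \<in> L2 \<Longrightarrow> hsmul c f \<in> L2"
  by (rule L2_dominated(1)[of f _ "cmod c"]) (simp_all add: hsmul_def norm_mult)

lemma l2inner_summable:
  assumes f: "f \<in> L2" and g: "g \<in> L2"
  shows "summable (\<lambda>k. \<Sum>r\<in>UNIV. f k r * cnj (g k r))"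
proof (rule summable_comparison_test')
  show "summable (\<lambda>k. (\<Sum>r\<in>UNIV. (cmod (f k r))\<^sup>2) + (\<Sum>r\<in>UNIV. (cmod (g k r))\<^sup>2))"
    using f g unfolding L2_def by (intro summable_add) auto
  fix k :: nat
  have "cmod (f k r * cnj (g k r)) \<le> (cmod (f k r))\<^sup>2 + (cmod (g k r))\<^sup>2" for r
  proof -
    have "0 \<le> cmod (f k r) * cmod (g k r)" by simp
    then show ?thesis using sum_squares_bound[of "cmod (f k r)" "cmod (g k r)"]
      unfolding norm_mult complex_mod_cnj by linarith
  qed
  then have "(\<Sum>r\<in>UNIV. cmod (f k r * cnj (g k r)))
      \<le> (\<Sum>r\<in>UNIV. (cmod (f k r))\<^sup>2) + (\<Sum>r\<in>UNIV. (cmod (g k r))\<^sup>2)"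
    by (simp add: sum_mono flip: sum.distrib)
  then show "norm (\<Sum>r\<in>UNIV. f k r * cnj (g k r))
      \<le> (\<Sum>r\<in>UNIV. (cmod (f k r))\<^sup>2) + (\<Sum>r\<in>UNIV. (cmod (g k r))\<^sup>2)"
    by (rule order_trans[OF norm_sum])
qed

lemma l2inner_hsub_left:
  assumes "f \<in> L2" "g \<in> L2" "h \<in> L2"
  shows "l2inner (hsub f g) h = l2inner f h - l2inner g h"
proof -
  have "l2inner (hsub f g) h
      = (\<Sum>k. (\<Sum>r\<in>UNIV. f k r * cnj (h k r)) - (\<Sum>r\<in>UNIV. g k r * cnj (h k r)))"
    unfolding l2inner_def hsub_def by (simp add: sum_subtractf algebra_simps)
  also have "\<dots> = l2inner f h - l2inner g h"
    unfolding l2inner_def by (rule suminf_diff[symmetric]) (use l2inner_summable assms in auto)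
  finally show ?thesis .
qed

lemma l2inner_hsub_right:
  assumes "f \<in> L2" "g \<in> L2" "h \<in> L2"
  shows "l2inner f (hsub g h) = l2inner f g - l2inner f h"
proof -
  have "l2inner f (hsub g h)
      = (\<Sum>k. (\<Sum>r\<in>UNIV. f k r * cnj (g k r)) - (\<Sum>r\<in>UNIV. f k r * cnj (h k r)))"
    unfolding l2inner_def hsub_def by (simp add: sum_subtractf algebra_simps)
  also have "\<dots> = l2inner f g - l2inner f h"
    unfolding l2inner_def by (rule suminf_diff[symmetric]) (use l2inner_summable assms in auto)
  finally show ?thesis .
qed

lemma l2_adjoint_eqI:
  assumes "h' \<in> L2" and "\<forall>f\<in>L2. l2inner (S f) h = l2inner f h'"
  shows "l2_adjoint S h = (h' :: 'n::finite hvec)"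
  unfolding l2_adjoint_def
proof (rule the_equality)
  show "h' \<in> L2 \<and> (\<forall>f\<in>L2. l2inner (S f) h = l2inner f h')" using assms by blast
  fix y assume y: "y \<in> L2 \<and> (\<forall>f\<in>L2. l2inner (S f) h = l2inner f y)"
  have "cnj (y k r) = cnj (h' k r)" for k r
  proof -
    have d: "hdelta k r 1 \<in> L2" by (rule hdelta_L2)
    have "l2inner (hdelta k r 1) y = l2inner (hdelta k r 1) h'"
      using y[THEN conjunct2, rule_format, OF d] assms(2)[rule_format, OF d] by simp
    then show ?thesis by (simp only: l2inner_hdelta)
  qed
  then show "y = h'" by (auto simp: fun_eq_iff)
qed

section \<open>Diagonal operators\<close>

definition diag_op :: "(nat \<Rightarrow> 'n \<Rightarrow> complex) \<Rightarrow> 'n hop" where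
  "diag_op d = (\<lambda>f k r. d k r * f k r)"

lemma bounded_op_diag_op:
  fixes d :: "nat \<Rightarrow> 'n::finite \<Rightarrow> complex"
  assumes "\<And>k r. cmod (d k r) \<le> B"
  shows "bounded_op (diag_op d)"
proof -
  have B: "0 \<le> B" by (rule order_trans[OF norm_ge_zero assms])
  have le: "cmod (diag_op d f k r) \<le> B * cmod (f k r)" for f k r
    unfolding diag_op_def norm_mult by (rule mult_right_mono[OF assms norm_ge_zero])
  have "l2norm (diag_op d f) \<le> B * l2norm f" if "f \<in> L2" for f
  proof -
    have "sqrt (l2sq (diag_op d f)) \<le> sqrt (B\<^sup>2 * l2sq f)"
      using L2_dominated(2)[of f "diag_op d f" B, OF that le] by (rule real_sqrt_le_mono)
    then show ?thesis unfolding l2norm_def using B by (simp add: real_sqrt_mult)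
  qed
  moreover have "diag_op d f \<in> L2" if "f \<in> L2" for f
    using L2_dominated(1)[of f "diag_op d f" B, OF that le] .
  ultimately show ?thesis
    unfolding bounded_op_def by (auto simp: diag_op_def hadd_def hsmul_def algebra_simps)
qed

lemma diag_op_idem_eq_zero:
  assumes d: "\<And>k r. d k r \<noteq> 0 \<and> d k r \<noteq> 1" and eq: "diag_op d g = diag_op d (diag_op d g)"
  shows "g = (\<lambda>k r. 0)"
proof (intro ext)
  fix k r
  have "d k r * g k r = d k r * (d k r * g k r)"
    using fun_cong[OF fun_cong[OF eq, of k], of r] unfolding diag_op_def by simp
  then have "d k r * (1 - d k r) * g k r = 0" by (simp add: algebra_simps)
  then show "g k r = 0" using d[of k r] by simp
qed

lemma sum_l2sq_sums:
  fixes m :: nat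
  assumes "\<forall>j<m. F j \<in> L2"
  shows "(\<lambda>k. \<Sum>r\<in>UNIV. \<Sum>j<m. (cmod (F j k r))\<^sup>2) sums (\<Sum>j<m. l2sq (F j))"
proof -
  have "(\<lambda>k. \<Sum>j<m. \<Sum>r\<in>UNIV. (cmod (F j k r))\<^sup>2) sums (\<Sum>j<m. l2sq (F j))"
    unfolding l2sq_def using assms by (intro sums_sum summable_sums) (auto simp: L2_def)
  then show ?thesis by (simp add: sum.swap[of _ "{..<m}"])
qed

lemma sum_l2sq_le:
  fixes m :: nat
  assumes F: "\<forall>j<m. F j \<in> L2"
    and le: "\<And>k. (\<Sum>r\<in>UNIV. \<Sum>i<m. (cmod (G i k r))\<^sup>2)
      \<le> C * (\<Sum>r\<in>UNIV. \<Sum>j<m. (cmod (F j k r))\<^sup>2)"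
  shows "(\<Sum>i<m. l2sq (G i)) \<le> C * (\<Sum>j<m. l2sq (F j))"
proof -
  define X where "X k = (\<Sum>r\<in>UNIV. \<Sum>i<m. (cmod (G i k r))\<^sup>2)" for k
  have Y: "(\<lambda>k. C * (\<Sum>r\<in>UNIV. \<Sum>j<m. (cmod (F j k r))\<^sup>2)) sums (C * (\<Sum>j<m. l2sq (F j)))"
    using sum_l2sq_sums[OF F] by (rule sums_mult)
  have "summable X"
  proof (rule summable_comparison_test'[OF sums_summable[OF Y]])
    fix k
    have "0 \<le> X k" unfolding X_def by (intro sum_nonneg) auto
    then show "norm (X k) \<le> C * (\<Sum>r\<in>UNIV. \<Sum>j<m. (cmod (F j k r))\<^sup>2)"
      using le[of k] unfolding X_def by simp
  qed
  have "G i \<in> L2" if "i < m" for i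
    unfolding L2_def mem_Collect_eq
  proof (rule summable_comparison_test'[OF \<open>summable X\<close>])
    fix k
    have "(\<Sum>r\<in>UNIV. (cmod (G i k r))\<^sup>2) \<le> X k"
      unfolding X_def by (intro sum_mono member_le_sum) (simp_all add: that)
    then show "norm (\<Sum>r\<in>UNIV. (cmod (G i k r))\<^sup>2) \<le> X k"
      by (simp add: sum_nonneg)
  qed
  then have "X sums (\<Sum>i<m. l2sq (G i))"
    unfolding X_def by (intro sum_l2sq_sums) simp
  then show ?thesis using Y le unfolding X_def by (rule sums_le[rotated])
qed

lemma bh_mat_norm_least:
  fixes X :: "nat \<Rightarrow> nat \<Rightarrow> 'n::finite hop"
  assumes "\<And>F. \<forall>j<m. F j \<in> L2 \<Longrightarrow> (\<Sum>j<m. l2sq (F j)) \<le> 1 \<Longrightarrow>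
      sqrt (\<Sum>i<m. l2sq (\<lambda>k r. \<Sum>j<m. X i j (F j) k r)) \<le> L"
  shows "bh_mat_norm m X \<le> L"
  unfolding bh_mat_norm_def
proof (rule cSup_least)
  have "sqrt (\<Sum>i<m. l2sq (\<lambda>k r. \<Sum>j<m. X i j ((\<lambda>j k r. 0) j) k r))
      \<in> {sqrt (\<Sum>i<m. l2sq (\<lambda>k r. \<Sum>j<m. X i j (F j) k r)) | F.
          (\<forall>j<m. F j \<in> L2) \<and> (\<Sum>j<m. l2sq (F j)) \<le> 1}"
    by (intro CollectI exI[of _ "\<lambda>j k r. 0"]) (simp add: L2_def l2sq_def)
  then show "{sqrt (\<Sum>i<m. l2sq (\<lambda>k r. \<Sum>j<m. X i j (F j) k r)) | F.
      (\<forall>j<m. F j \<in> L2) \<and> (\<Sum>j<m. l2sq (F j)) \<le> 1} \<noteq> {}"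
    by (metis equals0D)
next
  fix x assume "x \<in> {sqrt (\<Sum>i<m. l2sq (\<lambda>k r. \<Sum>j<m. X i j (F j) k r)) | F.
      (\<forall>j<m. F j \<in> L2) \<and> (\<Sum>j<m. l2sq (F j)) \<le> 1}"
  then obtain F where "x = sqrt (\<Sum>i<m. l2sq (\<lambda>k r. \<Sum>j<m. X i j (F j) k r))"
    and "\<forall>j<m. F j \<in> L2" "(\<Sum>j<m. l2sq (F j)) \<le> 1" by blast
  then show "x \<le> L" using assms[of F] by simp
qed

lemma bh_mat_norm_upper:
  fixes X :: "nat \<Rightarrow> nat \<Rightarrow> 'n::finite hop"
  assumes bound: "\<And>F. \<forall>j<m. F j \<in> L2 \<Longrightarrow> (\<Sum>j<m. l2sq (F j)) \<le> 1 \<Longrightarrow>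
      sqrt (\<Sum>i<m. l2sq (\<lambda>k r. \<Sum>j<m. X i j (F j) k r)) \<le> L"
    and F: "\<forall>j<m. F j \<in> L2" "(\<Sum>j<m. l2sq (F j)) \<le> 1"
  shows "sqrt (\<Sum>i<m. l2sq (\<lambda>k r. \<Sum>j<m. X i j (F j) k r)) \<le> bh_mat_norm m X"
  unfolding bh_mat_norm_def
proof (rule cSup_upper)
  show "sqrt (\<Sum>i<m. l2sq (\<lambda>k r. \<Sum>j<m. X i j (F j) k r))
      \<in> {sqrt (\<Sum>i<m. l2sq (\<lambda>k r. \<Sum>j<m. X i j (G j) k r)) | G.
          (\<forall>j<m. G j \<in> L2) \<and> (\<Sum>j<m. l2sq (G j)) \<le> 1}"
    by (intro CollectI exI[of _ F]) (simp add: F)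
  show "bdd_above {sqrt (\<Sum>i<m. l2sq (\<lambda>k r. \<Sum>j<m. X i j (G j) k r)) | G.
      (\<forall>j<m. G j \<in> L2) \<and> (\<Sum>j<m. l2sq (G j)) \<le> 1}"
  proof (rule bdd_aboveI)
    fix x assume "x \<in> {sqrt (\<Sum>i<m. l2sq (\<lambda>k r. \<Sum>j<m. X i j (G j) k r)) | G.
        (\<forall>j<m. G j \<in> L2) \<and> (\<Sum>j<m. l2sq (G j)) \<le> 1}"
    then obtain G where "x = sqrt (\<Sum>i<m. l2sq (\<lambda>k r. \<Sum>j<m. X i j (G j) k r))"
      and "\<forall>j<m. G j \<in> L2" "(\<Sum>j<m. l2sq (G j)) \<le> 1" by blast
    then show "x \<le> L" using bound[of G] by simp
  qed
qed

lemma bh_mat_values_diag_le: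
  fixes D :: "nat \<Rightarrow> nat \<Rightarrow> nat \<Rightarrow> 'n::finite \<Rightarrow> complex"
  assumes L: "\<And>k r. cmat_norm m (\<lambda>i j. D i j k r) \<le> L" "0 \<le> L"
    and F: "\<forall>j<m. F j \<in> L2" "(\<Sum>j<m. l2sq (F j)) \<le> 1"
  shows "sqrt (\<Sum>i<m. l2sq (\<lambda>k r. \<Sum>j<m. diag_op (D i j) (F j) k r)) \<le> L"
proof -
  have "(\<Sum>r\<in>UNIV. \<Sum>i<m. (cmod (\<Sum>j<m. diag_op (D i j) (F j) k r))\<^sup>2)
      \<le> L\<^sup>2 * (\<Sum>r\<in>UNIV. \<Sum>j<m. (cmod (F j k r))\<^sup>2)" for k
  proof -
    have "(\<Sum>r\<in>UNIV. \<Sum>i<m. (cmod (\<Sum>j<m. diag_op (D i j) (F j) k r))\<^sup>2)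
        = (\<Sum>r\<in>UNIV. (cvec_norm m (cmat_apply m (\<lambda>i j. D i j k r) (\<lambda>j. F j k r)))\<^sup>2)"
      by (simp add: power2_cvec_norm cmat_apply_def diag_op_def)
    also have "\<dots> \<le> (\<Sum>r\<in>UNIV. (L * cvec_norm m (\<lambda>j. F j k r))\<^sup>2)"
    proof (rule sum_mono)
      fix r
      have "cvec_norm m (cmat_apply m (\<lambda>i j. D i j k r) (\<lambda>j. F j k r)) \<le> L * cvec_norm m (\<lambda>j. F j k r)"
        by (rule order_trans[OF cmat_norm_bound mult_right_mono[OF L(1) cvec_norm_nonneg]])
      then show "(cvec_norm m (cmat_apply m (\<lambda>i j. D i j k r) (\<lambda>j. F j k r)))\<^sup>2
          \<le> (L * cvec_norm m (\<lambda>j. F j k r))\<^sup>2"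
        by (rule power_mono[OF _ cvec_norm_nonneg])
    qed
    also have "\<dots> = L\<^sup>2 * (\<Sum>r\<in>UNIV. \<Sum>j<m. (cmod (F j k r))\<^sup>2)"
      by (simp add: power_mult_distrib power2_cvec_norm sum_distrib_left)
    finally show ?thesis .
  qed
  then have "(\<Sum>i<m. l2sq (\<lambda>k r. \<Sum>j<m. diag_op (D i j) (F j) k r)) \<le> L\<^sup>2 * (\<Sum>j<m. l2sq (F j))"
    by (rule sum_l2sq_le[OF F(1)])
  also have "\<dots> \<le> L\<^sup>2" using F(2) by (simp add: mult_left_le)
  finally show ?thesis by (rule real_le_lsqrt[OF L(2)])
qed

lemma bh_mat_norm_diag_le:
  fixes D :: "nat \<Rightarrow> nat \<Rightarrow> nat \<Rightarrow> 'n::finite \<Rightarrow> complex"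
  assumes "\<And>k r. cmat_norm m (\<lambda>i j. D i j k r) \<le> L" "0 \<le> L"
  shows "bh_mat_norm m (\<lambda>i j. diag_op (D i j)) \<le> L"
  by (rule bh_mat_norm_least) (rule bh_mat_values_diag_le[OF assms])

lemma cmat_norm_le_bh_mat_norm_diag:
  fixes D :: "nat \<Rightarrow> nat \<Rightarrow> nat \<Rightarrow> 'n::finite \<Rightarrow> complex"
  assumes "\<And>k r. cmat_norm m (\<lambda>i j. D i j k r) \<le> L" "0 \<le> L"
  shows "cmat_norm m (\<lambda>i j. D i j k r) \<le> bh_mat_norm m (\<lambda>i j. diag_op (D i j))"
proof (rule cmat_norm_least)
  fix v assume v: "cvec_norm m v \<le> 1"
  define F where "F j = hdelta k r (v j)" for j
  have "(\<lambda>k' r'. \<Sum>j<m. diag_op (D i j) (F j) k' r')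
      = hdelta k r (cmat_apply m (\<lambda>i j. D i j k r) v i)" for i
    by (auto simp: fun_eq_iff F_def hdelta_def diag_op_def cmat_apply_def)
  then have "cvec_norm m (cmat_apply m (\<lambda>i j. D i j k r) v)
      = sqrt (\<Sum>i<m. l2sq (\<lambda>k r. \<Sum>j<m. diag_op (D i j) (F j) k r))"
    by (simp add: l2sq_hdelta cvec_norm_def)
  also have "\<dots> \<le> bh_mat_norm m (\<lambda>i j. diag_op (D i j))"
  proof (rule bh_mat_norm_upper[OF bh_mat_values_diag_le[OF assms]])
    show "\<forall>j<m. F j \<in> L2" by (simp add: F_def hdelta_L2)
    have "(\<Sum>j<m. (cmod (v j))\<^sup>2) \<le> 1"
      using v power_mono[OF v cvec_norm_nonneg, of 2] by (simp add: power2_cvec_norm)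
    then show "(\<Sum>j<m. l2sq (F j)) \<le> 1" by (simp add: F_def l2sq_hdelta)
  qed
  finally show "cvec_norm m (cmat_apply m (\<lambda>i j. D i j k r) v)
      \<le> bh_mat_norm m (\<lambda>i j. diag_op (D i j))" .
qed

section \<open>\<open>\<Psi>\<close> is a unital complete isometry\<close>

definition psi_coeff :: "(nat \<Rightarrow> real) \<Rightarrow> nat \<Rightarrow> 'n::finite \<Rightarrow> 'n \<Rightarrow> real" where
  "psi_coeff eps k r s = (if s = r then 1 - eps k else eps k / (real CARD('n) - 1))"

lemma phi_eq_sum_psi_coeff:
  fixes a :: "'n::finite \<Rightarrow> complex"
  shows "phi eps k a r = (\<Sum>s\<in>UNIV. of_real (psi_coeff eps k r s) * a s)"
proof -
  have "(\<Sum>s\<in>UNIV-{r}. of_real (psi_coeff eps k r s) * a s)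
      = of_real (eps k / (real CARD('n) - 1)) * (\<Sum>s\<in>UNIV-{r}. a s)"
    unfolding sum_distrib_left by (rule sum.cong) (auto simp: psi_coeff_def)
  then show ?thesis
    unfolding phi_def by (simp add: sum.remove[of UNIV r] psi_coeff_def mult.commute)
qed

lemma psi_coeff_bounds:
  assumes "CARD('n::finite) \<ge> 2" "0 < eps k" "eps k < 1"
  shows "0 < psi_coeff eps k (r::'n) s" and "psi_coeff eps k r s < 1"
  using assms by (auto simp: psi_coeff_def field_simps)

lemma sum_psi_coeff:
  assumes "CARD('n::finite) \<ge> 2"
  shows "(\<Sum>s\<in>UNIV. psi_coeff eps k (r::'n) s) = 1"
proof -
  have "(\<Sum>s\<in>UNIV-{r}. psi_coeff eps k r s) = real (CARD('n) - 1) * (eps k / (real CARD('n) - 1))"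
    by (simp add: psi_coeff_def card_Diff_singleton)
  also have "\<dots> = eps k" using assms by (simp add: of_nat_diff)
  finally show ?thesis by (simp add: sum.remove[of UNIV r] psi_coeff_def)
qed

lemma phi_tendsto:
  fixes a :: "'n::finite \<Rightarrow> complex"
  assumes "eps \<longlonglongrightarrow> 0"
  shows "(\<lambda>k. phi eps k a r) \<longlonglongrightarrow> a r"
proof -
  have "(\<lambda>k. phi eps k a r) \<longlonglongrightarrow> a r * of_real (1 - 0)
      + of_real (0 * inverse (real CARD('n) - 1)) * (\<Sum>j\<in>UNIV - {r}. a j)"
    unfolding phi_def divide_inverse by (intro tendsto_intros assms)
  then show ?thesis by simp
qed

lemma Psi_eq_diag_op: "Psi eps a = diag_op (\<lambda>k. phi eps k a)"
  by (simp add: Psi_def diag_op_def)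

lemma linear_map_Psi: "linear_map (Psi eps)"
  unfolding linear_map_def Psi_def hadd_def hsmul_def phi_def
  by (simp add: sum.distrib algebra_simps flip: sum_distrib_left)

lemma Psi_one:
  assumes "CARD('n::finite) \<ge> 2"
  shows "Psi eps (\<lambda>r::'n. 1) = (\<lambda>f. f)"
  using sum_psi_coeff[OF assms]
  by (simp add: Psi_def phi_eq_sum_psi_coeff flip: of_real_sum)

lemma bounded_op_Psi:
  assumes card: "CARD('n::finite) \<ge> 2" and eps: "\<forall>k. 0 < eps k \<and> eps k < 1"
  shows "bounded_op (Psi eps (a :: 'n \<Rightarrow> complex))"
  unfolding Psi_eq_diag_op
proof (rule bounded_op_diag_op)
  fix k r
  have "cmod (phi eps k a r) \<le> (\<Sum>s\<in>UNIV. cmod (of_real (psi_coeff eps k r s) * a s))"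
    unfolding phi_eq_sum_psi_coeff by (rule norm_sum)
  also have "\<dots> \<le> (\<Sum>s\<in>UNIV. cmod (a s))"
    using psi_coeff_bounds[of eps k r, OF card] eps
    by (intro sum_mono) (simp add: norm_mult mult_left_le_one_le less_imp_le)
  finally show "cmod (phi eps k a r) \<le> (\<Sum>s\<in>UNIV. cmod (a s))" .
qed

lemma linf_mat_norm_ge:
  fixes A :: "nat \<Rightarrow> nat \<Rightarrow> 'n::finite \<Rightarrow> complex"
  shows "cmat_norm m (\<lambda>i j. A i j s) \<le> linf_mat_norm m A"
  unfolding linf_mat_norm_def by (rule Max_ge) auto

lemma linf_mat_norm_attained:
  obtains s where "linf_mat_norm m A = cmat_norm m (\<lambda>i j. A i j (s :: 'n::finite))"
proof -
  have "linf_mat_norm m A \<in> range (\<lambda>s. cmat_norm m (\<lambda>i j. A i j s))"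
    unfolding linf_mat_norm_def by (rule Max_in) auto
  then show ?thesis using that by blast
qed

lemma cmat_norm_phi_le:
  assumes card: "CARD('n::finite) \<ge> 2" and "0 < eps k" "eps k < 1"
  shows "cmat_norm m (\<lambda>i j. phi eps k (A i j) r) \<le> linf_mat_norm m (A :: nat \<Rightarrow> nat \<Rightarrow> 'n \<Rightarrow> complex)"
proof -
  have "cmat_norm m (\<lambda>i j. phi eps k (A i j) r)
      \<le> (\<Sum>s\<in>UNIV. psi_coeff eps k r s * cmat_norm m (\<lambda>i j. A i j s))"
    unfolding phi_eq_sum_psi_coeff
    using psi_coeff_bounds(1)[of eps k r, OF assms] by (intro cmat_norm_convex_le) (auto intro: less_imp_le)
  also have "\<dots> \<le> (\<Sum>s\<in>UNIV. psi_coeff eps k r s * linf_mat_norm m A)"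
    using psi_coeff_bounds(1)[of eps k r, OF assms] linf_mat_norm_ge
    by (intro sum_mono mult_left_mono) (auto intro: less_imp_le)
  also have "\<dots> = linf_mat_norm m A"
    using sum_psi_coeff[OF card] by (simp flip: sum_distrib_right)
  finally show ?thesis .
qed

lemma bh_mat_norm_Psi:
  assumes card: "CARD('n::finite) \<ge> 2" and eps: "\<forall>k. 0 < eps k \<and> eps k < 1"
    and lim: "eps \<longlonglongrightarrow> 0"
  shows "bh_mat_norm m (\<lambda>i j. Psi eps (A i j)) = linf_mat_norm m (A :: nat \<Rightarrow> nat \<Rightarrow> 'n \<Rightarrow> complex)"
proof (rule antisym)
  have bound: "cmat_norm m (\<lambda>i j. phi eps k (A i j) r) \<le> linf_mat_norm m A" for k r
    using cmat_norm_phi_le[OF card] eps by blast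
  have nonneg: "0 \<le> linf_mat_norm m A"
    using cmat_norm_nonneg linf_mat_norm_ge by (rule order_trans)
  show "bh_mat_norm m (\<lambda>i j. Psi eps (A i j)) \<le> linf_mat_norm m A"
    unfolding Psi_eq_diag_op by (rule bh_mat_norm_diag_le[OF bound nonneg])
  obtain s where s: "linf_mat_norm m A = cmat_norm m (\<lambda>i j. A i j s)"
    by (rule linf_mat_norm_attained)
  show "linf_mat_norm m A \<le> bh_mat_norm m (\<lambda>i j. Psi eps (A i j))"
    unfolding s Psi_eq_diag_op
    by (rule cmat_norm_le_of_tendsto[OF cmat_norm_le_bh_mat_norm_diag[OF bound nonneg] phi_tendsto[OF lim]])
qed

lemma complete_isometry_Psi:
  assumes "CARD('n::finite) \<ge> 2" and "\<forall>k. 0 < eps k \<and> eps k < 1" and "eps \<longlonglongrightarrow> 0"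
  shows "complete_isometry (Psi eps :: ('n \<Rightarrow> complex) \<Rightarrow> 'n hop)"
  unfolding complete_isometry_def
  using linear_map_Psi bounded_op_Psi[OF assms(1,2)] bh_mat_norm_Psi[OF assms] by blast

section \<open>Compressions of \<open>\<Psi>\<close>\<close>

definition min_proj :: "'n \<Rightarrow> 'n \<Rightarrow> complex" where
  "min_proj s = (\<lambda>r. if r = s then 1 else 0)"

lemma Psi_min_proj_idem_eq_zero:
  assumes card: "CARD('n::finite) \<ge> 2" and eps: "\<forall>k. 0 < eps k \<and> eps k < 1"
    and idem: "Psi eps (min_proj s) g = Psi eps (min_proj s) (Psi eps (min_proj (s::'n)) g)"
  shows "g = (\<lambda>k r. 0)"
proof (rule diag_op_idem_eq_zero)
  fix k r
  have "phi eps k (min_proj s) r = of_real (psi_coeff eps k r s)"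
    unfolding phi_eq_sum_psi_coeff min_proj_def by (simp add: if_distrib sum.delta cong: if_cong)
  then show "phi eps k (min_proj s) r \<noteq> 0 \<and> phi eps k (min_proj s) r \<noteq> 1"
    using psi_coeff_bounds[of eps k r s, OF card] eps by auto
qed (use idem in \<open>simp add: Psi_eq_diag_op\<close>)

definition compl_op :: "'n hop \<Rightarrow> 'n hop" where
  "compl_op p f = hsub f (p f)"

lemma bounded_op_L2: "bounded_op T \<Longrightarrow> f \<in> L2 \<Longrightarrow> T f \<in> L2"
  by (simp add: bounded_op_def)

lemma bounded_op_hsub:
  assumes T: "bounded_op T" and f: "f \<in> L2" and g: "g \<in> L2"
  shows "T (hsub f g) = hsub (T f) (T g)"
proof -
  have "hsub f g = hadd f (hsmul (-1) g)" and "hsub (T f) (T g) = hadd (T f) (hsmul (-1) (T g))"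
    by (simp_all add: hsub_def hadd_def hsmul_def)
  moreover have "T (hadd f (hsmul (-1) g)) = hadd (T f) (hsmul (-1) (T g))"
    using T f g L2_hsmul[OF g] by (simp add: bounded_op_def)
  ultimately show ?thesis by simp
qed

lemma projection_bounded_op: "projection p \<Longrightarrow> bounded_op p"
  unfolding projection_def by simp

lemma projection_idem: "projection p \<Longrightarrow> f \<in> L2 \<Longrightarrow> p (p f) = p f"
  unfolding projection_def by simp

lemma projection_selfadjoint:
  assumes "projection p" and "f \<in> L2" and "g \<in> L2"
  shows "l2inner (p f) g = l2inner f (p g)"
  using assms unfolding projection_def by blast

lemma projection_L2: "projection p \<Longrightarrow> f \<in> L2 \<Longrightarrow> p f \<in> L2"
  by (rule bounded_op_L2[OF projection_bounded_op])

lemma compl_op_L2: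
  assumes "projection p" and "f \<in> L2"
  shows "compl_op p f \<in> L2"
  unfolding compl_op_def by (rule L2_hsub[OF assms(2) projection_L2[OF assms]])

lemma compl_op_idem:
  assumes p: "projection p" and f: "f \<in> L2"
  shows "compl_op p (compl_op p f) = compl_op p f"
proof -
  have "p (compl_op p f) = hsub (p f) (p (p f))"
    unfolding compl_op_def by (rule bounded_op_hsub[OF projection_bounded_op[OF p] f projection_L2[OF p f]])
  also have "p (p f) = p f" by (rule projection_idem[OF p f])
  finally show ?thesis by (simp add: compl_op_def hsub_def)
qed

lemma l2_adjoint_compl_op:
  assumes q: "projection q" and h: "h \<in> L2"
  shows "l2_adjoint (compl_op q) h = compl_op q (h :: 'n::finite hvec)"
proof (rule l2_adjoint_eqI)
  show "compl_op q h \<in> L2" by (rule compl_op_L2[OF q h])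
  show "\<forall>f\<in>L2. l2inner (compl_op q f) h = l2inner f (compl_op q h)"
  proof
    fix f :: "'n hvec" assume f: "f \<in> L2"
    have "l2inner (q f) h = l2inner f (q h)" by (rule projection_selfadjoint[OF q f h])
    then show "l2inner (compl_op q f) h = l2inner f (compl_op q h)"
      unfolding compl_op_def
      using l2inner_hsub_left[OF f projection_L2[OF q f] h] l2inner_hsub_right[OF f h projection_L2[OF q h]]
      by simp
  qed
qed

lemma projection_fixes_of_compression_idem:
  assumes card: "CARD('n::finite) \<ge> 2" and eps: "\<forall>k. 0 < eps k \<and> eps k < 1"
    and p: "projection p" and f: "f \<in> L2"
    and fixed: "compl_op p (Psi eps (min_proj s) f)
      = Psi eps (min_proj s) (compl_op p (compl_op p (Psi eps (min_proj (s::'n)) f)))"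
    and comm: "\<And>g. g \<in> L2 \<Longrightarrow>
      compl_op p (Psi eps (min_proj s) g) = Psi eps (min_proj s) (compl_op p g)"
  shows "p f = f"
proof -
  have PsiL2: "Psi eps (min_proj s) f \<in> L2" using bounded_op_Psi[OF card eps] f by (rule bounded_op_L2)
  have "Psi eps (min_proj s) (compl_op p f) = Psi eps (min_proj s) (Psi eps (min_proj s) (compl_op p f))"
    using fixed unfolding compl_op_idem[OF p PsiL2] unfolding comm[OF f] .
  then have "compl_op p f = (\<lambda>k r. 0)"
    by (rule Psi_min_proj_idem_eq_zero[OF card eps])
  then show ?thesis by (auto simp: compl_op_def hsub_def fun_eq_iff)
qed

lemma triple_morphism_compression_trivial:
  assumes card: "CARD('n::finite) \<ge> 2" and eps: "\<forall>k. 0 < eps k \<and> eps k < 1"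
    and p: "projection p" and q: "projection q"
    and comm: "\<And>a f. f \<in> L2 \<Longrightarrow> compl_op q (Psi eps a f) = Psi eps a (compl_op p f)"
    and T: "triple_morphism (\<lambda>a f. compl_op q (Psi eps a f))"
    and f: "f \<in> L2"
  shows "p f = f \<and> q f = (f :: 'n hvec)"
proof -
  have PsiL2: "Psi eps a g \<in> L2" if "g \<in> L2" for a :: "'n \<Rightarrow> complex" and g
    using bounded_op_Psi[OF card eps] that by (rule bounded_op_L2)
  have qp: "compl_op q g = compl_op p g" if "g \<in> L2" for g
    using comm[OF that, of "\<lambda>_. 1"] unfolding Psi_one[OF card] .
  let ?e = "min_proj (undefined :: 'n)"
  have comm_p: "compl_op p (Psi eps ?e g) = Psi eps ?e (compl_op p g)" if "g \<in> L2" for g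
    unfolding qp[OF PsiL2[OF that], symmetric] by (rule comm[OF that])
  define t where "t = compl_op p (Psi eps ?e f)"
  have tL2: "t \<in> L2" unfolding t_def by (intro compl_op_L2[OF p] PsiL2 f)
  have ee: "(\<lambda>r. ?e r * cnj 1 * ?e r) = ?e" by (auto simp: min_proj_def)
  have "\<forall>x y z. \<forall>g\<in>L2. compl_op q (Psi eps (\<lambda>r. x r * cnj (y r) * z r) g)
      = compl_op q (Psi eps x (l2_adjoint (\<lambda>g. compl_op q (Psi eps y g)) (compl_op q (Psi eps z g))))"
    using T by (simp add: triple_morphism_def)
  from this[THEN spec[of _ ?e], THEN spec[of _ "\<lambda>_. 1"], THEN spec[of _ ?e], THEN bspec, OF f]
  have "t = compl_op q (Psi eps ?e (l2_adjoint (compl_op q) t))"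
    unfolding ee Psi_one[OF card] qp[OF PsiL2[OF f]] t_def[symmetric] by simp
  also have "\<dots> = Psi eps ?e (compl_op p (compl_op p t))"
    unfolding l2_adjoint_compl_op[OF q tL2] qp[OF tL2] by (rule comm[OF compl_op_L2[OF p tL2]])
  finally have "t = Psi eps ?e (compl_op p t)"
    unfolding compl_op_idem[OF p tL2] .
  then have "p f = f"
    unfolding t_def by (rule projection_fixes_of_compression_idem[OF card eps p f]) (rule comm_p)
  moreover have "q f = p f"
    using qp[OF f] by (auto simp: compl_op_def hsub_def fun_eq_iff)
  ultimately show ?thesis by simp
qed

lemma star_hom_compression_trivial:
  assumes card: "CARD('n::finite) \<ge> 2" and eps: "\<forall>k. 0 < eps k \<and> eps k < 1"
    and p: "projection p"
    and comm: "\<And>a f. f \<in> L2 \<Longrightarrow> compl_op p (Psi eps a f) = Psi eps a (compl_op p f)"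
    and T: "star_hom (\<lambda>a f. compl_op p (Psi eps a f))"
    and f: "f \<in> L2"
  shows "p f = (f :: 'n hvec)"
proof -
  let ?e = "min_proj (undefined :: 'n)"
  define t where "t = compl_op p (Psi eps ?e f)"
  have "Psi eps ?e f \<in> L2"
    using bounded_op_Psi[OF card eps] f by (rule bounded_op_L2)
  then have tL2: "t \<in> L2" unfolding t_def by (rule compl_op_L2[OF p])
  have ee: "(\<lambda>r. ?e r * ?e r) = ?e" by (auto simp: min_proj_def)
  have "\<forall>a b. \<forall>g\<in>L2. compl_op p (Psi eps (\<lambda>r. a r * b r) g)
      = compl_op p (Psi eps a (compl_op p (Psi eps b g)))"
    using T by (simp add: star_hom_def)
  from this[THEN spec[of _ ?e], THEN spec[of _ ?e], THEN bspec, OF f]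
  have "t = compl_op p (Psi eps ?e t)"
    unfolding ee t_def[symmetric] .
  also have "\<dots> = Psi eps ?e (compl_op p t)" by (rule comm[OF tL2])
  finally show ?thesis
    unfolding t_def by (rule projection_fixes_of_compression_idem[OF card eps p f]) (rule comm)
qed

theorem mainTheorem17:
  fixes eps :: "nat \<Rightarrow> real"
  assumes "CARD('n::finite) \<ge> 2"
    and "\<forall>k. 0 < eps k \<and> eps k < 1"
    and "\<forall>k. eps (Suc k) < eps k"
    and "eps \<longlonglongrightarrow> 0"
  shows "unital_map (Psi eps :: ('n \<Rightarrow> complex) \<Rightarrow> 'n hop) \<and>
         complete_isometry (Psi eps :: ('n \<Rightarrow> complex) \<Rightarrow> 'n hop) \<and>
         (\<forall>p q :: 'n hop. projection p \<and> projection q \<and>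
            (\<forall>a. \<forall>f\<in>L2. hsub (Psi eps a f) (q (Psi eps a f)) = Psi eps a (hsub f (p f))) \<and>
            triple_morphism (\<lambda>a f. hsub (Psi eps a f) (q (Psi eps a f)))
          \<longrightarrow> (\<forall>f\<in>L2. p f = f \<and> q f = f)) \<and>
         (\<forall>p :: 'n hop. projection p \<and>
            (\<forall>a. \<forall>f\<in>L2. hsub (Psi eps a f) (p (Psi eps a f)) = Psi eps a (hsub f (p f))) \<and>
            star_hom (\<lambda>a f. hsub (Psi eps a f) (p (Psi eps a f)))
          \<longrightarrow> (\<forall>f\<in>L2. p f = f))"
proof (intro conjI allI impI)
  note card = assms(1) and eps = assms(2)
  show "unital_map (Psi eps :: ('n \<Rightarrow> complex) \<Rightarrow> 'n hop)"
    unfolding unital_map_def Psi_one[OF card] by simp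
  show "complete_isometry (Psi eps :: ('n \<Rightarrow> complex) \<Rightarrow> 'n hop)"
    using complete_isometry_Psi[OF card eps assms(4)] .
  show "\<forall>f\<in>L2. p f = f \<and> q f = f"
    if "projection p \<and> projection q \<and>
        (\<forall>a. \<forall>f\<in>L2. hsub (Psi eps a f) (q (Psi eps a f)) = Psi eps a (hsub f (p f))) \<and>
        triple_morphism (\<lambda>a f. hsub (Psi eps a f) (q (Psi eps a f)))" for p q :: "'n hop"
    using that triple_morphism_compression_trivial[OF card eps, of p q, unfolded compl_op_def] by blast
  show "\<forall>f\<in>L2. p f = f"
    if "projection p \<and>
        (\<forall>a. \<forall>f\<in>L2. hsub (Psi eps a f) (p (Psi eps a f)) = Psi eps a (hsub f (p f))) \<and>
        star_hom (\<lambda>a f. hsub (Psi eps a f) (p (Psi eps a f)))" for p :: "'n hop"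
    using that star_hom_compression_trivial[OF card eps, of p, unfolded compl_op_def] by blast
qed

end
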